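(* Let $\Theta=\Theta^1\times\cdots\times\Theta^k\subseteq\mathbb{R}^p$ be a Cartesian product of convex sets, and let $f:\mathbb{R}^p\to\mathbb{R}$ be continuous and bounded below, such that for all $\theta,\theta'\in\Theta$ the directional derivative $\nabla f(\theta,\theta'-\theta)$ exists. Consider the randomized block coordinate scheme: given $\theta_0\in\Theta$, for $n\ge1$ choose a separable surrogate $g_n(\theta)=\sum_{i=1}^k g_n^i(\theta^i)$ of $f$, pick an index $\hat\imath_n\in\{1,\dots,k\}$ uniformly at random (independently), set $\theta_n^{\hat\imath_n}\in\operatorname{arg\,min}_{\theta^{\hat\imath_n}\in\Theta^{\hat\imath_n}}g_n^{\hat\imath_n}(\theta^{\hat\imath_n})$ and $\theta_n^i=\theta_{n-1}^i$ for $i\ne\hat\imath_n$. Assume that each $g_n$ is a majorant function in $\mathcal{S}_L(f,\theta_{n-1})$, and that $\theta_0$ is a minimizer over $\Theta$ of some separable majorant function in $\mathcal{S}_L(f,\theta_{-1})$ for some $\theta_{-1}\in\Theta$. Then, with probability one, $(f(\theta_n))_{n\ge0}$ is monotonically non-increasing and $$\liminf_{n\to+\infty}\ \inf_{\theta\in\Theta\setminus\{\theta_n\}}\frac{\nabla f(\theta_n,\theta-\theta_n)}{\|\theta-\theta_n\|_2}\ \ge 0.$$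
   Context: $\theta=(\theta^1,\dots,\theta^k)$ with $\theta^i\in\Theta^i$. Directional derivative: $\nabla f(\theta,\theta'-\theta)\triangleq\lim_{t\to0^+}\frac{f(\theta+t(\theta'-\theta))-f(\theta)}{t}$. First-order surrogates: $g:\mathbb{R}^p\to\mathbb{R}$ belongs to $\mathcal{S}_L(f,\kappa)$ if (a) $g(\theta')\ge f(\theta')$ for all $\theta'\in\operatorname{arg\,min}_{\theta\in\Theta}g(\theta)$, and (b) $h\triangleq g-f$ is differentiable with $L$-Lipschitz gradient, $h(\kappa)=0$, $\nabla h(\kappa)=0$. A majorant function satisfies $g\ge f$ everywhere. The minimizers are assumed to exist. *)

theory Defs
  imports "HOL-Probability.Probability"
begin

text \<open>Block structure: the coordinates of a vector in real^'n are partitioned into k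
blocks via blk :: 'n => nat (with range {..<k}); block i of theta is represented
as the vector that keeps the coordinates of block i and zeroes all others.\<close>

definition blk_proj :: "('n::finite \<Rightarrow> nat) \<Rightarrow> nat \<Rightarrow> real^'n \<Rightarrow> real^'n" where
  "blk_proj blk i x = (\<chi> j. if blk j = i then x $ j else 0)"

definition blk_product :: "('n::finite \<Rightarrow> nat) \<Rightarrow> nat \<Rightarrow> (nat \<Rightarrow> (real^'n) set) \<Rightarrow> (real^'n) set" where
  "blk_product blk k T = {x. \<forall>i<k. blk_proj blk i x \<in> T i}"

definition separable :: "('n::finite \<Rightarrow> nat) \<Rightarrow> nat \<Rightarrow> (real^'n \<Rightarrow> real) \<Rightarrow> bool" where
  "separable blk k g \<longleftrightarrow> (\<exists>gi. \<forall>x. g x = (\<Sum>i<k. gi i (blk_proj blk i x)))"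

definition arg_min_set :: "('a \<Rightarrow> real) \<Rightarrow> 'a set \<Rightarrow> 'a set" where
  "arg_min_set g S = {x \<in> S. \<forall>y\<in>S. g x \<le> g y}"

definition dir_deriv_exists :: "('a::real_normed_vector \<Rightarrow> real) \<Rightarrow> 'a \<Rightarrow> 'a \<Rightarrow> bool" where
  "dir_deriv_exists f x d \<longleftrightarrow>
     (\<exists>l. ((\<lambda>t. (f (x + t *\<^sub>R d) - f x) / t) \<longlongrightarrow> l) (at_right 0))"

definition dir_deriv :: "('a::real_normed_vector \<Rightarrow> real) \<Rightarrow> 'a \<Rightarrow> 'a \<Rightarrow> real" where
  "dir_deriv f x d = Lim (at_right 0) (\<lambda>t. (f (x + t *\<^sub>R d) - f x) / t)"

definition majorant :: "('a \<Rightarrow> real) \<Rightarrow> ('a \<Rightarrow> real) \<Rightarrow> bool" where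
  "majorant f g \<longleftrightarrow> (\<forall>x. f x \<le> g x)"

definition first_order_surrogate ::
  "real \<Rightarrow> ('a::euclidean_space \<Rightarrow> real) \<Rightarrow> 'a set \<Rightarrow> 'a \<Rightarrow> ('a \<Rightarrow> real) \<Rightarrow> bool" where
  "first_order_surrogate L f Th \<kappa> g \<longleftrightarrow>
     (\<forall>x\<in>arg_min_set g Th. f x \<le> g x) \<and>
     (\<exists>G. (\<forall>x. ((\<lambda>y. g y - f y) has_derivative (\<lambda>v. G x \<bullet> v)) (at x)) \<and>
          (\<forall>x y. norm (G x - G y) \<le> L * norm (x - y)) \<and>
          g \<kappa> - f \<kappa> = 0 \<and> G \<kappa> = 0)"

end

theory Submission
  imports Defs
begin

text \<open>Write \<open>h\<^sub>n = g\<^sub>n - f \<ge> 0\<close>. It has Lipschitz gradient and vanishes to first order at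
  \<open>\<theta>\<^sub>n\<^sub>-\<^sub>1\<close>, so \<open>\<parallel>\<nabla>h\<^sub>n(\<theta>\<^sub>n)\<parallel>\<^sup>2 \<le> 4L h\<^sub>n(\<theta>\<^sub>n) \<le> 4L (f(\<theta>\<^sub>n\<^sub>-\<^sub>1) - f(\<theta>\<^sub>n))\<close>.
  Along the block just minimised, \<open>g\<^sub>n\<close> cannot decrease, so the slope of \<open>f\<close> at \<open>\<theta>\<^sub>n\<close> in any
  feasible direction within that block is at least \<open>-\<parallel>\<nabla>h\<^sub>n(\<theta>\<^sub>n)\<parallel>\<close>. Along a block that was not
  updated, the separable \<open>g\<^sub>n\<close> has the same increments at \<open>\<theta>\<^sub>n\<close> as at \<open>\<theta>\<^sub>n\<^sub>-\<^sub>1\<close>, where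
  \<open>\<nabla>h\<^sub>n\<close> vanishes; so the slope bound inherited from \<open>\<theta>\<^sub>n\<^sub>-\<^sub>1\<close> worsens by at most
  \<open>\<parallel>\<nabla>h\<^sub>n(\<theta>\<^sub>n)\<parallel>\<close>. Summing over the blocks, with \<open>g\<^sub>n\<^sub>+\<^sub>1\<close> tangent at \<open>\<theta>\<^sub>n\<close>, bounds the
  directional derivative at \<open>\<theta>\<^sub>n\<close> below by \<open>-(\<Sum>\<^sub>j Z\<^sup>j\<^sub>n) \<parallel>\<theta> - \<theta>\<^sub>n\<parallel>\<close>, where the slope
  deficit \<open>Z\<^sup>j\<close> of block \<open>j\<close> restarts whenever \<open>j\<close> is drawn and otherwise grows by
  \<open>sqrt (4L (f(\<theta>\<^sub>n\<^sub>-\<^sub>1) - f(\<theta>\<^sub>n)))\<close>. As \<open>j\<close> is drawn with probability \<open>1/k\<close>,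
  \<open>E (Z\<^sup>j\<^sub>n\<^sub>+\<^sub>1)\<^sup>2 \<le> q E (Z\<^sup>j\<^sub>n)\<^sup>2 + C E (f(\<theta>\<^sub>n) - f(\<theta>\<^sub>n\<^sub>+\<^sub>1))\<close> with \<open>q < 1\<close>; since \<open>f\<close> is
  bounded below, \<open>\<Sum>\<^sub>n E (Z\<^sup>j\<^sub>n)\<^sup>2 < \<infinity>\<close>, hence \<open>Z\<^sup>j\<^sub>n \<longrightarrow> 0\<close> almost surely.\<close>

section \<open>Functions with Lipschitz gradient\<close>

lemma lipschitz_gradient_taylor:
  fixes h :: "'a::euclidean_space \<Rightarrow> real"
  assumes hd: "\<And>x. (h has_derivative (\<lambda>v. G x \<bullet> v)) (at x)"
    and lip: "\<And>x y. norm (G x - G y) \<le> L * norm (x - y)"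
  shows "\<bar>h y - h x - G x \<bullet> (y - x)\<bar> \<le> L * (norm (y - x))\<^sup>2"
proof (cases "y = x")
  case True
  then show ?thesis using lip[of x x] by simp
next
  case False
  define d where "d = y - x"
  define \<phi> where "\<phi> t = h (x + t *\<^sub>R d) - t * (G x \<bullet> d)" for t
  have "DERIV \<phi> t :> G (x + t *\<^sub>R d) \<bullet> d - G x \<bullet> d" for t
  proof -
    have "((\<lambda>t. x + t *\<^sub>R d) has_derivative (\<lambda>s. s *\<^sub>R d)) (at t)"
      by (auto intro!: derivative_eq_intros)
    from has_derivative_compose[OF this hd]
    have "((\<lambda>t. h (x + t *\<^sub>R d)) has_real_derivative G (x + t *\<^sub>R d) \<bullet> d) (at t)"
      by (rule has_derivative_imp_has_field_derivative) simp
    then show ?thesis unfolding \<phi>_def by (auto intro!: derivative_eq_intros)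
  qed
  then obtain z where z: "0 < z" "z < 1" "\<phi> 1 - \<phi> 0 = G (x + z *\<^sub>R d) \<bullet> d - G x \<bullet> d"
    using MVT2[of 0 1 \<phi>] by force
  have "\<bar>G (x + z *\<^sub>R d) \<bullet> d - G x \<bullet> d\<bar> \<le> norm (G (x + z *\<^sub>R d) - G x) * norm d"
    using Cauchy_Schwarz_ineq2 by (metis inner_diff_left)
  also have "\<dots> \<le> L * norm (z *\<^sub>R d) * norm d"
    using lip[of "x + z *\<^sub>R d" x] by (simp add: mult_right_mono)
  also have "\<dots> = L * z * (norm d)\<^sup>2"
    using z by (simp add: power2_eq_square)
  finally have bound: "\<bar>\<phi> 1 - \<phi> 0\<bar> \<le> L * z * (norm d)\<^sup>2" using z(3) by simp
  then have "0 \<le> L * z * (norm d)\<^sup>2" by linarith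
  then have "0 \<le> L" using z False by (simp add: d_def zero_le_mult_iff)
  then have "L * z * (norm d)\<^sup>2 \<le> L * (norm d)\<^sup>2"
    using z by (simp add: mult.assoc mult_left_mono mult_left_le_one_le)
  moreover have "h y - h x - G x \<bullet> (y - x) = \<phi> 1 - \<phi> 0" unfolding \<phi>_def d_def by simp
  ultimately show ?thesis using bound d_def by simp
qed

lemma taylor_increment_bound:
  fixes H :: "'a::real_inner \<Rightarrow> real"
  assumes "\<And>x y. \<bar>H y - H x - G x \<bullet> (y - x)\<bar> \<le> c * (norm (y - x))\<^sup>2"
  shows "\<bar>H (x + v) - H x\<bar> \<le> norm (G x) * norm v + c * (norm v)\<^sup>2"
  using assms[where x=x and y="x + v"] Cauchy_Schwarz_ineq2[of "G x" v] by simp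

text \<open>Evaluating the quadratic upper model at its minimiser \<open>x - G x / (2L)\<close> and using \<open>h \<ge> 0\<close>.\<close>
lemma nonneg_taylor_gradient_bound:
  fixes h :: "'a::euclidean_space \<Rightarrow> real"
  assumes taylor: "\<And>x y. \<bar>h y - h x - G x \<bullet> (y - x)\<bar> \<le> L * (norm (y - x))\<^sup>2"
    and "L > 0" and "\<And>x. 0 \<le> h x"
  shows "(norm (G x))\<^sup>2 \<le> 4 * L * h x"
proof -
  define y where "y = x - (1 / (2 * L)) *\<^sub>R G x"
  have inner: "G x \<bullet> (y - x) = - (norm (G x))\<^sup>2 / (2 * L)"
    unfolding y_def by (simp add: power2_norm_eq_inner)
  have norm: "(norm (y - x))\<^sup>2 = (norm (G x))\<^sup>2 / (4 * L\<^sup>2)"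
    unfolding y_def using \<open>L > 0\<close> by (simp add: power2_eq_square field_simps)
  have "h y \<le> h x + G x \<bullet> (y - x) + L * (norm (y - x))\<^sup>2"
    using taylor[where x=x and y=y] by linarith
  also have "\<dots> = h x - (norm (G x))\<^sup>2 / (4 * L)"
    unfolding inner norm using \<open>L > 0\<close> by (simp add: field_simps power2_eq_square)
  finally have "0 \<le> h x - (norm (G x))\<^sup>2 / (4 * L)" using \<open>0 \<le> h y\<close> by linarith
  then show ?thesis using \<open>L > 0\<close> by (simp add: field_simps)
qed

lemma first_order_surrogate_taylor:
  fixes f g :: "'a::euclidean_space \<Rightarrow> real"
  assumes "first_order_surrogate L f S \<kappa> g"
  obtains G where
    "\<And>x y. \<bar>(g y - f y) - (g x - f x) - G x \<bullet> (y - x)\<bar> \<le> (\<bar>L\<bar> + 1) * (norm (y - x))\<^sup>2"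
    and "G \<kappa> = 0"
proof -
  obtain G where d: "\<And>x. ((\<lambda>y. g y - f y) has_derivative (\<lambda>v. G x \<bullet> v)) (at x)"
    and lip: "\<And>x y. norm (G x - G y) \<le> L * norm (x - y)" and "G \<kappa> = 0"
    using assms unfolding first_order_surrogate_def by blast
  have lip': "norm (G x - G y) \<le> (\<bar>L\<bar> + 1) * norm (x - y)" for x y
    using lip[where x=x and y=y] mult_right_mono[of L "\<bar>L\<bar> + 1" "norm (x - y)"]
    by (meson abs_ge_self add_increasing2 norm_ge_zero order_trans zero_le_one)
  show ?thesis
    by (rule that[of G]) (use lipschitz_gradient_taylor[OF d lip'] \<open>G \<kappa> = 0\<close> in auto)
qed

lemma dir_deriv_ge_of_quadratic_minorant:
  fixes f :: "'a::real_normed_vector \<Rightarrow> real"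
  assumes "dir_deriv_exists f x d"
    and minorant: "\<And>s. 0 < s \<Longrightarrow> s \<le> 1 \<Longrightarrow> - A * s - K * s\<^sup>2 \<le> f (x + s *\<^sub>R d) - f x"
  shows "- A \<le> dir_deriv f x d"
proof -
  obtain l where l: "((\<lambda>t. (f (x + t *\<^sub>R d) - f x) / t) \<longlongrightarrow> l) (at_right 0)"
    using assms(1) unfolding dir_deriv_exists_def by blast
  have "eventually (\<lambda>t. - A - K * t \<le> (f (x + t *\<^sub>R d) - f x) / t) (at_right (0::real))"
    unfolding eventually_at_right_field
  proof (intro exI conjI allI impI)
    fix t :: real assume "0 < t" "t < 1"
    then have "(- A - K * t) * t \<le> f (x + t *\<^sub>R d) - f x"
      using minorant[of t] by (simp add: algebra_simps power2_eq_square)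
    then show "- A - K * t \<le> (f (x + t *\<^sub>R d) - f x) / t"
      using \<open>0 < t\<close> by (simp add: pos_le_divide_eq)
  qed (rule zero_less_one)
  moreover have "((\<lambda>t. - A - K * t) \<longlongrightarrow> - A - K * 0) (at_right 0)"
    by (intro tendsto_intros)
  ultimately have "- A - K * 0 \<le> l"
    by (intro tendsto_le[OF _ l]) simp_all
  moreover have "dir_deriv f x d = l"
    unfolding dir_deriv_def using l by (rule tendsto_Lim[rotated]) simp
  ultimately show ?thesis by simp
qed

lemma power2_add_le_weighted:
  fixes z a e :: real
  assumes "0 < e"
  shows "(z + a)\<^sup>2 \<le> (1 + e) * z\<^sup>2 + (1 + 1 / e) * a\<^sup>2"
proof -
  have "0 \<le> (e * z - a)\<^sup>2 / e" using assms by simp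
  then show ?thesis using assms by (simp add: field_simps power2_eq_square)
qed

lemma summable_of_contracting_recursion:
  fixes S E :: "nat \<Rightarrow> real"
  assumes S_nonneg: "\<And>n. 0 \<le> S n" and E_lb: "\<And>n. lb \<le> E n"
    and "0 \<le> q" "q < 1" "0 \<le> C"
    and rec: "\<And>n. S (Suc n) \<le> q * S n + C * (E n - E (Suc n))"
  shows "summable S"
proof -
  have "(\<Sum>n<N. S (Suc n)) \<le> (q * S 0 + C * (E 0 - lb)) / (1 - q)" for N
  proof -
    define T where "T = (\<Sum>n<N. S (Suc n))"
    have "T \<le> (\<Sum>n<N. q * S n + C * (E n - E (Suc n)))"
      unfolding T_def by (rule sum_mono) (rule rec)
    also have "\<dots> = q * (\<Sum>n<N. S n) + C * (E 0 - E N)"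
      by (simp add: sum.distrib sum_distrib_left[symmetric] sum_lessThan_telescope')
    also have "\<dots> \<le> q * (S 0 + T) + C * (E 0 - lb)"
    proof (intro add_mono mult_left_mono)
      have "(\<Sum>n<N. S n) \<le> (\<Sum>n<Suc N. S n)" using S_nonneg by simp
      then show "(\<Sum>n<N. S n) \<le> S 0 + T" unfolding T_def by (simp only: sum.lessThan_Suc_shift)
    qed (use assms E_lb[of N] in auto)
    finally show ?thesis unfolding T_def[symmetric] using \<open>q < 1\<close> by (simp add: field_simps)
  qed
  then have "summable (\<lambda>n. S (Suc n))"
    by (intro summableI_nonneg_bounded) (use S_nonneg in auto)
  then show ?thesis by (simp add: summable_Suc_iff)
qed

lemma liminf_nonneg_of_vanishing_lower_bound:
  fixes a :: "nat \<Rightarrow> ereal" and W :: "nat \<Rightarrow> real"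
  assumes "\<And>n. ereal (- W n) \<le> a n" and "W \<longlonglongrightarrow> 0"
  shows "0 \<le> liminf a"
proof -
  have "liminf (\<lambda>n. ereal (- W n)) = ereal (- 0)"
    using tendsto_minus[OF assms(2)] by (intro lim_imp_Liminf) (auto simp: lim_ereal)
  moreover have "liminf (\<lambda>n. ereal (- W n)) \<le> liminf a"
    using assms(1) by (intro Liminf_mono) auto
  ultimately show ?thesis by (simp add: zero_ereal_def)
qed

lemma blk_proj_add [simp]: "blk_proj blk i (x + y) = blk_proj blk i x + blk_proj blk i y"
  unfolding blk_proj_def by (auto simp: vec_eq_iff)

lemma blk_proj_diff [simp]: "blk_proj blk i (x - y) = blk_proj blk i x - blk_proj blk i y"
  unfolding blk_proj_def by (auto simp: vec_eq_iff)

lemma blk_proj_scaleR [simp]: "blk_proj blk i (c *\<^sub>R x) = c *\<^sub>R blk_proj blk i x"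
  unfolding blk_proj_def by (auto simp: vec_eq_iff)

lemma blk_proj_blk_proj [simp]:
  "blk_proj blk i (blk_proj blk j x) = (if i = j then blk_proj blk j x else 0)"
  unfolding blk_proj_def by (auto simp: vec_eq_iff)

lemma norm_blk_proj_le: "norm (blk_proj blk i x) \<le> norm x"
  unfolding norm_vec_def blk_proj_def by (rule L2_set_mono) auto

lemma mem_blk_product_iff: "x \<in> blk_product blk k T \<longleftrightarrow> (\<forall>i<k. blk_proj blk i x \<in> T i)"
  unfolding blk_product_def by simp

lemma separable_increment_shift:
  fixes gi :: "nat \<Rightarrow> real^'n::finite \<Rightarrow> real"
  assumes "\<And>i. i \<noteq> c \<Longrightarrow> blk_proj blk i x' = blk_proj blk i x"
    and "\<And>i. i \<noteq> j \<Longrightarrow> blk_proj blk i w = 0" and "j \<noteq> c"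
  shows "(\<Sum>i<k. gi i (blk_proj blk i (x' + w))) - (\<Sum>i<k. gi i (blk_proj blk i x'))
       = (\<Sum>i<k. gi i (blk_proj blk i (x + w))) - (\<Sum>i<k. gi i (blk_proj blk i x))"
proof -
  have "gi i (blk_proj blk i (x' + w)) - gi i (blk_proj blk i x')
      = gi i (blk_proj blk i (x + w)) - gi i (blk_proj blk i x)" for i
    using assms by (cases "i = j") auto
  then show ?thesis by (simp add: sum_subtractf[symmetric])
qed

lemma separable_increment_split:
  fixes gi :: "nat \<Rightarrow> real^'n::finite \<Rightarrow> real"
  shows "(\<Sum>i<k. gi i (blk_proj blk i (x + v))) - (\<Sum>i<k. gi i (blk_proj blk i x))
   = (\<Sum>j<k. (\<Sum>i<k. gi i (blk_proj blk i (x + blk_proj blk j v))) - (\<Sum>i<k. gi i (blk_proj blk i x)))"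
proof -
  have "(\<Sum>i<k. gi i (blk_proj blk i (x + blk_proj blk j v))) - (\<Sum>i<k. gi i (blk_proj blk i x))
      = (\<Sum>i<k. if i = j then gi j (blk_proj blk j (x + v)) - gi j (blk_proj blk j x) else 0)" for j
    by (simp only: sum_subtractf[symmetric]) (rule sum.cong, auto)
  then show ?thesis by (simp add: sum_subtractf[symmetric] sum.delta)
qed

section \<open>A single block majorization-minimization step\<close>

locale block_mm =
  fixes blk :: "'n::finite \<Rightarrow> nat" and k :: nat and Th :: "nat \<Rightarrow> (real^'n) set"
    and f :: "real^'n \<Rightarrow> real" and L :: real
  assumes blocks_convex: "\<forall>i<k. convex (Th i)"
    and f_dd: "\<forall>x\<in>blk_product blk k Th. \<forall>y\<in>blk_product blk k Th. dir_deriv_exists f x (y - x)"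
begin

abbreviation \<Theta> :: "(real^'n) set" where "\<Theta> \<equiv> blk_product blk k Th"

text \<open>A Lipschitz constant for \<open>\<nabla>(g - f)\<close> when \<open>g \<in> S\<^sub>L(f, \<kappa>)\<close>, made positive because
  \<open>nonneg_taylor_gradient_bound\<close> needs that.\<close>
abbreviation Lp :: real where "Lp \<equiv> \<bar>L\<bar> + 1"

definition block_sum :: "(nat \<Rightarrow> real^'n \<Rightarrow> real) \<Rightarrow> real^'n \<Rightarrow> real" where
  "block_sum gi x = (\<Sum>i<k. gi i (blk_proj blk i x))"

definition mm_step :: "real^'n \<Rightarrow> real^'n \<Rightarrow> nat \<Rightarrow> (nat \<Rightarrow> real^'n \<Rightarrow> real) \<Rightarrow> bool" where
  "mm_step x x' c gi \<longleftrightarrow> c < k \<and> majorant f (block_sum gi) \<and>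
     first_order_surrogate L f \<Theta> x (block_sum gi) \<and>
     (\<forall>j. blk j \<noteq> c \<longrightarrow> x' $ j = x $ j) \<and>
     blk_proj blk c x' \<in> arg_min_set (gi c) (Th c)"

definition block_slope_bound :: "nat \<Rightarrow> real^'n \<Rightarrow> real \<Rightarrow> bool" where
  "block_slope_bound j x E \<longleftrightarrow> (\<forall>y\<in>\<Theta>. \<exists>K. \<forall>s. 0 < s \<and> s \<le> 1 \<longrightarrow>
      - (E * s * norm (blk_proj blk j (y - x))) - K * s\<^sup>2
        \<le> f (x + s *\<^sub>R blk_proj blk j (y - x)) - f x)"

lemma block_segment_mem:
  assumes "x \<in> \<Theta>" "y \<in> \<Theta>" "0 \<le> s" "s \<le> 1"
  shows "x + s *\<^sub>R blk_proj blk j (y - x) \<in> \<Theta>"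
  unfolding mem_blk_product_iff
proof (intro allI impI)
  fix i assume "i < k"
  then have "blk_proj blk i x \<in> Th i" "blk_proj blk i y \<in> Th i"
    using assms(1,2) unfolding mem_blk_product_iff by auto
  moreover have "blk_proj blk i (x + s *\<^sub>R blk_proj blk j (y - x))
      = (if i = j then (1 - s) *\<^sub>R blk_proj blk i x + s *\<^sub>R blk_proj blk i y else blk_proj blk i x)"
    by (simp add: algebra_simps)
  ultimately show "blk_proj blk i (x + s *\<^sub>R blk_proj blk j (y - x)) \<in> Th i"
    using blocks_convex \<open>i < k\<close> assms(3,4) by (auto intro: convexD_alt)
qed

text \<open>Since \<open>g - f\<close> is flat to first order at the tangency point \<open>x\<close> and \<open>g\<close> is separable, the
  increment of \<open>f\<close> along \<open>v\<close> is the sum of its increments along the blocks of \<open>v\<close>, up to \<open>O(\<parallel>v\<parallel>\<^sup>2)\<close>.\<close>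
lemma separable_tangent_increment:
  assumes "first_order_surrogate L f S x (block_sum gi)"
  shows "(\<Sum>j<k. f (x + blk_proj blk j v) - f x) - (real k + 1) * Lp * (norm v)\<^sup>2 \<le> f (x + v) - f x"
proof -
  obtain G where taylor: "\<And>u w. \<bar>(block_sum gi w - f w) - (block_sum gi u - f u) - G u \<bullet> (w - u)\<bar>
      \<le> Lp * (norm (w - u))\<^sup>2" and "G x = 0"
    by (rule first_order_surrogate_taylor[OF assms], rule that)
  let ?h = "\<lambda>z. block_sum gi z - f z"
  have h_incr: "\<bar>?h (x + w) - ?h x\<bar> \<le> Lp * (norm w)\<^sup>2" for w
    using taylor_increment_bound[where H="?h", OF taylor, of x w] \<open>G x = 0\<close> by simp
  have block_incr: "- (Lp * (norm v)\<^sup>2) \<le> ?h (x + blk_proj blk j v) - ?h x" for j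
  proof -
    have "Lp * (norm (blk_proj blk j v))\<^sup>2 \<le> Lp * (norm v)\<^sup>2"
      by (intro mult_left_mono) (auto simp: norm_blk_proj_le power_mono)
    then show ?thesis using h_incr[of "blk_proj blk j v"] unfolding abs_le_iff by linarith
  qed
  have "block_sum gi (x + v) - block_sum gi x = (\<Sum>j<k. block_sum gi (x + blk_proj blk j v) - block_sum gi x)"
    unfolding block_sum_def by (rule separable_increment_split)
  then have "f (x + v) - f x = (\<Sum>j<k. f (x + blk_proj blk j v) - f x)
      + (\<Sum>j<k. ?h (x + blk_proj blk j v) - ?h x) - (?h (x + v) - ?h x)"
    by (simp add: sum.distrib[symmetric] algebra_simps)
  moreover have "- (real k * (Lp * (norm v)\<^sup>2)) \<le> (\<Sum>j<k. ?h (x + blk_proj blk j v) - ?h x)"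
    using sum_mono[of "{..<k}" "\<lambda>_. - (Lp * (norm v)\<^sup>2)", OF block_incr] by simp
  moreover have "?h (x + v) - ?h x \<le> Lp * (norm v)\<^sup>2" using h_incr[of v] by simp
  ultimately show ?thesis by (simp add: algebra_simps)
qed

lemma dir_deriv_lower_bound:
  assumes surrogate: "first_order_surrogate L f S x (block_sum gi)"
    and "x \<in> \<Theta>" "y \<in> \<Theta>"
    and slope: "\<And>j. j < k \<Longrightarrow> block_slope_bound j x (E j)" and E_nonneg: "\<And>j. j < k \<Longrightarrow> 0 \<le> E j"
  shows "- (\<Sum>j<k. E j) * norm (y - x) \<le> dir_deriv f x (y - x)"
proof -
  define d where "d = y - x"
  have "\<forall>j\<in>{..<k}. \<exists>K. \<forall>s. 0 < s \<and> s \<le> 1 \<longrightarrow>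
      - (E j * s * norm (blk_proj blk j d)) - K * s\<^sup>2 \<le> f (x + s *\<^sub>R blk_proj blk j d) - f x"
    using slope \<open>y \<in> \<Theta>\<close> unfolding block_slope_bound_def d_def by blast
  then obtain K where K: "\<And>j s. j < k \<Longrightarrow> 0 < s \<Longrightarrow> s \<le> 1 \<Longrightarrow>
      - (E j * s * norm (blk_proj blk j d)) - K j * s\<^sup>2 \<le> f (x + s *\<^sub>R blk_proj blk j d) - f x"
    by (metis bchoice lessThan_iff)
  have "- ((\<Sum>j<k. E j) * norm d) * s - ((\<Sum>j<k. K j) + (real k + 1) * Lp * (norm d)\<^sup>2) * s\<^sup>2
      \<le> f (x + s *\<^sub>R d) - f x" if s: "0 < s" "s \<le> 1" for s
  proof -
    have "- (E j * s * norm d) - K j * s\<^sup>2 \<le> f (x + s *\<^sub>R blk_proj blk j d) - f x" if "j < k" for j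
    proof -
      have "E j * s * norm (blk_proj blk j d) \<le> E j * s * norm d"
        using E_nonneg[OF that] s norm_blk_proj_le by (intro mult_left_mono) auto
      then show ?thesis using K[OF that s] by linarith
    qed
    then have "(\<Sum>j<k. - (E j * s * norm d) - K j * s\<^sup>2)
        \<le> (\<Sum>j<k. f (x + s *\<^sub>R blk_proj blk j d) - f x)"
      by (intro sum_mono) auto
    moreover have "(\<Sum>j<k. - (E j * s * norm d) - K j * s\<^sup>2)
        = - ((\<Sum>j<k. E j) * norm d) * s - (\<Sum>j<k. K j) * s\<^sup>2"
      by (simp add: sum_subtractf sum_distrib_left sum_distrib_right sum_negf mult_ac)
    moreover have "(norm (s *\<^sub>R d))\<^sup>2 = s\<^sup>2 * (norm d)\<^sup>2" using s by (simp add: power_mult_distrib)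
    ultimately show ?thesis
      using separable_tangent_increment[OF surrogate, of "s *\<^sub>R d"] by (simp add: algebra_simps)
  qed
  then have "- ((\<Sum>j<k. E j) * norm d) \<le> dir_deriv f x d"
    by (intro dir_deriv_ge_of_quadratic_minorant) (use f_dd assms(2,3) d_def in auto)
  then show ?thesis unfolding d_def by simp
qed

context
  fixes x x' :: "real^'n" and c :: nat and gi :: "nat \<Rightarrow> real^'n \<Rightarrow> real"
  assumes step: "mm_step x x' c gi"
begin

lemma mm_step_index_less: "c < k"
  using step unfolding mm_step_def by blast

lemma mm_step_majorant: "f z \<le> block_sum gi z"
  using step unfolding mm_step_def majorant_def by blast

lemma mm_step_surrogate: "first_order_surrogate L f \<Theta> x (block_sum gi)"
  using step unfolding mm_step_def by blast

lemma mm_step_block_argmin: "blk_proj blk c x' \<in> arg_min_set (gi c) (Th c)"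
  using step unfolding mm_step_def by blast

lemma mm_step_keeps_coordinate: "blk i \<noteq> c \<Longrightarrow> x' $ i = x $ i"
  using step unfolding mm_step_def by blast

lemma mm_step_other_blocks: "j \<noteq> c \<Longrightarrow> blk_proj blk j x' = blk_proj blk j x"
  unfolding blk_proj_def by (auto simp: vec_eq_iff mm_step_keeps_coordinate)

lemma mm_step_mem:
  assumes "x \<in> \<Theta>"
  shows "x' \<in> \<Theta>"
  unfolding mem_blk_product_iff
proof (intro allI impI)
  fix j assume "j < k"
  then show "blk_proj blk j x' \<in> Th j"
    using mm_step_block_argmin assms mm_step_other_blocks[of j]
    unfolding arg_min_set_def mem_blk_product_iff by (cases "j = c") auto
qed

lemma mm_step_block_minimal:
  assumes "\<And>j. j \<noteq> c \<Longrightarrow> blk_proj blk j z = blk_proj blk j x'" and "blk_proj blk c z \<in> Th c"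
  shows "block_sum gi x' \<le> block_sum gi z"
  unfolding block_sum_def
proof (rule sum_mono)
  fix j
  show "gi j (blk_proj blk j x') \<le> gi j (blk_proj blk j z)"
    using mm_step_block_argmin assms unfolding arg_min_set_def by (cases "j = c") auto
qed

lemma mm_step_surrogate_le:
  assumes "x \<in> \<Theta>"
  shows "block_sum gi x' \<le> f x"
proof -
  have "block_sum gi x' \<le> block_sum gi x"
    using assms mm_step_index_less mm_step_other_blocks unfolding mem_blk_product_iff
    by (intro mm_step_block_minimal) auto
  moreover have "block_sum gi x = f x"
    using mm_step_surrogate unfolding first_order_surrogate_def by auto
  ultimately show ?thesis by simp
qed

lemma mm_step_descent:
  assumes "x \<in> \<Theta>"
  shows "f x' \<le> f x"
  using mm_step_surrogate_le[OF assms] mm_step_majorant[of x'] by simp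

text \<open>Since \<open>g - f \<ge> 0\<close> has Lipschitz gradient, its gradient at \<open>x'\<close> is controlled by
  \<open>g(x') - f(x') \<le> f(x) - f(x')\<close>.\<close>
lemma mm_step_gradient_bound:
  assumes "x \<in> \<Theta>"
  obtains G where
    "\<And>u v. \<bar>(block_sum gi v - f v) - (block_sum gi u - f u) - G u \<bullet> (v - u)\<bar> \<le> Lp * (norm (v - u))\<^sup>2"
    and "G x = 0" and "norm (G x') \<le> sqrt (4 * Lp * (f x - f x'))"
proof -
  obtain G where taylor:
      "\<And>u v. \<bar>(block_sum gi v - f v) - (block_sum gi u - f u) - G u \<bullet> (v - u)\<bar> \<le> Lp * (norm (v - u))\<^sup>2"
    and "G x = 0"
    by (rule first_order_surrogate_taylor[OF mm_step_surrogate], rule that)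
  have "(norm (G x'))\<^sup>2 \<le> 4 * Lp * (block_sum gi x' - f x')"
    by (rule nonneg_taylor_gradient_bound[where h="\<lambda>z. block_sum gi z - f z", OF taylor])
      (simp_all add: mm_step_majorant)
  also have "\<dots> \<le> 4 * Lp * (f x - f x')"
    using mm_step_surrogate_le[OF assms] by (intro mult_left_mono) auto
  finally have "norm (G x') \<le> sqrt (4 * Lp * (f x - f x'))" by (rule real_le_rsqrt)
  with taylor \<open>G x = 0\<close> show ?thesis by (rule that)
qed

lemma block_slope_bound_updated:
  assumes "x \<in> \<Theta>"
  shows "block_slope_bound c x' (sqrt (4 * Lp * (f x - f x')))"
  unfolding block_slope_bound_def
proof
  fix y assume "y \<in> \<Theta>"
  obtain G where taylor:
      "\<And>u v. \<bar>(block_sum gi v - f v) - (block_sum gi u - f u) - G u \<bullet> (v - u)\<bar> \<le> Lp * (norm (v - u))\<^sup>2"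
    and "G x = 0" and grad: "norm (G x') \<le> sqrt (4 * Lp * (f x - f x'))"
    by (rule mm_step_gradient_bound[OF assms], rule that)
  define d where "d = blk_proj blk c (y - x')"
  let ?e = "sqrt (4 * Lp * (f x - f x'))"
  have bound: "- (?e * s * norm d) - (Lp * (norm d)\<^sup>2) * s\<^sup>2 \<le> f (x' + s *\<^sub>R d) - f x'"
    if s: "0 < s" "s \<le> 1" for s
  proof -
    have "x' + s *\<^sub>R d \<in> \<Theta>"
      unfolding d_def using block_segment_mem[OF mm_step_mem[OF assms] \<open>y \<in> \<Theta>\<close>] s by simp
    then have "block_sum gi x' \<le> block_sum gi (x' + s *\<^sub>R d)"
      using mm_step_index_less unfolding mem_blk_product_iff
      by (intro mm_step_block_minimal) (auto simp: d_def)
    moreover have "\<bar>(block_sum gi (x' + s *\<^sub>R d) - f (x' + s *\<^sub>R d)) - (block_sum gi x' - f x')\<bar>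
        \<le> norm (G x') * norm (s *\<^sub>R d) + Lp * (norm (s *\<^sub>R d))\<^sup>2"
      by (rule taylor_increment_bound[OF taylor])
    moreover have "norm (G x') * norm (s *\<^sub>R d) \<le> ?e * s * norm d"
      using mult_right_mono[OF grad, of "s * norm d"] s by (simp add: mult.assoc)
    moreover have "Lp * (norm (s *\<^sub>R d))\<^sup>2 = Lp * (norm d)\<^sup>2 * s\<^sup>2"
      using s by (simp add: power_mult_distrib)
    ultimately show ?thesis unfolding abs_le_iff by linarith
  qed
  show "\<exists>K. \<forall>s. 0 < s \<and> s \<le> 1 \<longrightarrow> - (?e * s * norm (blk_proj blk c (y - x'))) - K * s\<^sup>2
      \<le> f (x' + s *\<^sub>R blk_proj blk c (y - x')) - f x'"
    unfolding d_def[symmetric] by (rule exI, intro allI impI, elim conjE, rule bound)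
qed

text \<open>Along a block \<open>j\<close> that was not updated, \<open>f\<close> and \<open>g\<close> have the same increments up to those of
  \<open>g - f\<close>, which are of second order at \<open>x\<close> and carry the small gradient at \<open>x'\<close>; and the increments
  of the separable \<open>g\<close> along block \<open>j\<close> are the same at \<open>x\<close> and at \<open>x'\<close>.\<close>
lemma block_slope_bound_kept:
  assumes "x \<in> \<Theta>" "j \<noteq> c" and slope: "block_slope_bound j x E"
  shows "block_slope_bound j x' (E + sqrt (4 * Lp * (f x - f x')))"
  unfolding block_slope_bound_def
proof
  fix y assume "y \<in> \<Theta>"
  obtain G where taylor:
      "\<And>u v. \<bar>(block_sum gi v - f v) - (block_sum gi u - f u) - G u \<bullet> (v - u)\<bar> \<le> Lp * (norm (v - u))\<^sup>2"
    and "G x = 0" and grad: "norm (G x') \<le> sqrt (4 * Lp * (f x - f x'))"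
    by (rule mm_step_gradient_bound[OF assms(1)], rule that)
  define d where "d = blk_proj blk j (y - x')"
  have d_eq: "blk_proj blk j (y - x) = d"
    using mm_step_other_blocks[OF \<open>j \<noteq> c\<close>] by (simp add: d_def)
  obtain K where "\<forall>s. 0 < s \<and> s \<le> 1 \<longrightarrow>
      - (E * s * norm (blk_proj blk j (y - x))) - K * s\<^sup>2 \<le> f (x + s *\<^sub>R blk_proj blk j (y - x)) - f x"
    using slope \<open>y \<in> \<Theta>\<close> unfolding block_slope_bound_def by blast
  then have K: "\<forall>s. 0 < s \<and> s \<le> 1 \<longrightarrow> - (E * s * norm d) - K * s\<^sup>2 \<le> f (x + s *\<^sub>R d) - f x"
    unfolding d_eq .
  let ?e = "sqrt (4 * Lp * (f x - f x'))"
  let ?h = "\<lambda>z. block_sum gi z - f z"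
  have bound: "- ((E + ?e) * s * norm d) - (K + 2 * (Lp * (norm d)\<^sup>2)) * s\<^sup>2 \<le> f (x' + s *\<^sub>R d) - f x'"
    if s: "0 < s" "s \<le> 1" for s
  proof -
    define w where "w = s *\<^sub>R d"
    have "norm w = s * norm d" using s unfolding w_def by simp
    have "block_sum gi (x' + w) - block_sum gi x' = block_sum gi (x + w) - block_sum gi x"
      unfolding block_sum_def
      by (rule separable_increment_shift[where c=c and j=j])
        (use mm_step_other_blocks \<open>j \<noteq> c\<close> in \<open>auto simp: w_def d_def\<close>)
    moreover have "\<bar>?h (x + w) - ?h x\<bar> \<le> Lp * (norm w)\<^sup>2"
      using taylor_increment_bound[where H="?h", OF taylor, of x w] \<open>G x = 0\<close> by simp
    moreover have "\<bar>?h (x' + w) - ?h x'\<bar> \<le> norm (G x') * norm w + Lp * (norm w)\<^sup>2"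
      by (rule taylor_increment_bound[where H="?h", OF taylor])
    moreover have "norm (G x') * norm w \<le> ?e * s * norm d"
      unfolding \<open>norm w = s * norm d\<close> using grad s by (simp add: mult.assoc mult_right_mono)
    moreover have "Lp * (norm w)\<^sup>2 = Lp * (norm d)\<^sup>2 * s\<^sup>2"
      unfolding \<open>norm w = s * norm d\<close> by (simp add: power_mult_distrib)
    moreover have "- (E * s * norm d) - K * s\<^sup>2 \<le> f (x + w) - f x"
      using K s unfolding w_def by blast
    moreover have "(E + ?e) * s * norm d = E * s * norm d + ?e * s * norm d"
      and "(K + 2 * (Lp * (norm d)\<^sup>2)) * s\<^sup>2 = K * s\<^sup>2 + 2 * (Lp * (norm d)\<^sup>2 * s\<^sup>2)"
      by (simp_all add: algebra_simps)
    ultimately show ?thesis unfolding w_def[symmetric] abs_le_iff by linarith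
  qed
  show "\<exists>K. \<forall>s. 0 < s \<and> s \<le> 1 \<longrightarrow> - ((E + ?e) * s * norm (blk_proj blk j (y - x'))) - K * s\<^sup>2
      \<le> f (x' + s *\<^sub>R blk_proj blk j (y - x')) - f x'"
    unfolding d_def[symmetric] by (rule exI, intro allI impI, elim conjE, rule bound)
qed

end

lemma block_slope_bound_at_surrogate_minimiser:
  assumes surrogate: "first_order_surrogate L f \<Theta> \<kappa> g" and min: "x0 \<in> arg_min_set g \<Theta>"
  obtains E where "0 \<le> E" and "\<And>j. block_slope_bound j x0 E"
proof -
  obtain G where taylor:
      "\<And>u v. \<bar>(g v - f v) - (g u - f u) - G u \<bullet> (v - u)\<bar> \<le> Lp * (norm (v - u))\<^sup>2"
    and "G \<kappa> = 0"
    by (rule first_order_surrogate_taylor[OF surrogate], rule that)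
  have "block_slope_bound j x0 (norm (G x0))" for j
    unfolding block_slope_bound_def
  proof
    fix y assume "y \<in> \<Theta>"
    define d where "d = blk_proj blk j (y - x0)"
    have bound: "- (norm (G x0) * s * norm d) - (Lp * (norm d)\<^sup>2) * s\<^sup>2 \<le> f (x0 + s *\<^sub>R d) - f x0"
      if s: "0 < s" "s \<le> 1" for s
    proof -
      have "x0 \<in> \<Theta>" using min unfolding arg_min_set_def by simp
      then have "x0 + s *\<^sub>R d \<in> \<Theta>"
        unfolding d_def using block_segment_mem[OF _ \<open>y \<in> \<Theta>\<close>] s by simp
      then have "g x0 \<le> g (x0 + s *\<^sub>R d)"
        using min unfolding arg_min_set_def by blast
      moreover have "\<bar>(g (x0 + s *\<^sub>R d) - f (x0 + s *\<^sub>R d)) - (g x0 - f x0)\<bar>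
          \<le> norm (G x0) * norm (s *\<^sub>R d) + Lp * (norm (s *\<^sub>R d))\<^sup>2"
        by (rule taylor_increment_bound[OF taylor])
      moreover have "norm (G x0) * norm (s *\<^sub>R d) = norm (G x0) * s * norm d"
        and "Lp * (norm (s *\<^sub>R d))\<^sup>2 = Lp * (norm d)\<^sup>2 * s\<^sup>2"
        using s by (simp_all add: power_mult_distrib)
      ultimately show ?thesis unfolding abs_le_iff by linarith
    qed
    show "\<exists>K. \<forall>s. 0 < s \<and> s \<le> 1 \<longrightarrow> - (norm (G x0) * s * norm (blk_proj blk j (y - x0))) - K * s\<^sup>2
        \<le> f (x0 + s *\<^sub>R blk_proj blk j (y - x0)) - f x0"
      unfolding d_def[symmetric] by (rule exI, intro allI impI, elim conjE, rule bound)
  qed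
  then show ?thesis using that[of "norm (G x0)"] by simp
qed

end

section \<open>Uniformly random block indices\<close>

text \<open>Every random quantity of the scheme is a function of the finitely many indices drawn so far.
  Its expectation is therefore the average over the \<open>k ^ n\<close> equally likely index histories,
  which replaces all conditional expectations of the paper by finite sums.\<close>

locale uniform_indices = prob_space M
  for M :: "'w measure" and I :: "nat \<Rightarrow> 'w \<Rightarrow> nat" and k :: nat +
  assumes indices_indep: "indep_vars (\<lambda>_. count_space UNIV) I {1..}"
    and indices_less: "\<And>n \<omega>. 1 \<le> n \<Longrightarrow> \<omega> \<in> space M \<Longrightarrow> I n \<omega> < k"
    and indices_uniform: "\<And>n i. 1 \<le> n \<Longrightarrow> i < k \<Longrightarrow> prob {\<omega>\<in>space M. I n \<omega> = i} = 1 / real k"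
begin

definition hist :: "nat \<Rightarrow> 'w \<Rightarrow> nat list" where
  "hist n \<omega> = map (\<lambda>m. I (Suc m) \<omega>) [0..<n]"

definition histories :: "nat \<Rightarrow> nat list set" where
  "histories n = {v. set v \<subseteq> {..<k} \<and> length v = n}"

definition hist_determined :: "nat \<Rightarrow> ('w \<Rightarrow> 'a) \<Rightarrow> bool" where
  "hist_determined n X \<longleftrightarrow> (\<forall>\<omega>\<in>space M. \<forall>\<omega>'\<in>space M. hist n \<omega> = hist n \<omega>' \<longrightarrow> X \<omega> = X \<omega>')"

definition hist_rep :: "nat list \<Rightarrow> 'w" where
  "hist_rep v = (SOME \<omega>. \<omega> \<in> space M \<and> hist (length v) \<omega> = v)"

definition hist_mean :: "nat \<Rightarrow> ('w \<Rightarrow> real) \<Rightarrow> real" where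
  "hist_mean n X = (\<Sum>v\<in>histories n. X (hist_rep v)) / real k ^ n"

lemma k_pos: "0 < k"
proof -
  obtain \<omega> where "\<omega> \<in> space M" using not_empty by blast
  then show ?thesis using indices_less[of 1 \<omega>] by simp
qed

lemma hist_Suc: "hist (Suc n) \<omega> = hist n \<omega> @ [I (Suc n) \<omega>]"
  unfolding hist_def by simp

lemma hist_eq_iff: "hist n \<omega> = v \<longleftrightarrow> length v = n \<and> (\<forall>m<n. I (Suc m) \<omega> = v ! m)"
  unfolding hist_def by (auto simp: list_eq_iff_nth_eq)

lemma hist_eq_hist_iff: "hist n \<omega> = hist n \<omega>' \<longleftrightarrow> (\<forall>m\<in>{1..n}. I m \<omega> = I m \<omega>')"
  unfolding hist_def image_Suc_lessThan[symmetric] by (auto simp: list_eq_iff_nth_eq)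

lemma hist_in_histories: "\<omega> \<in> space M \<Longrightarrow> hist n \<omega> \<in> histories n"
  unfolding histories_def hist_def using indices_less by auto

lemma hist_determinedI:
  "(\<And>\<omega> \<omega>'. \<omega> \<in> space M \<Longrightarrow> \<omega>' \<in> space M \<Longrightarrow> hist n \<omega> = hist n \<omega>' \<Longrightarrow> X \<omega> = X \<omega>')
   \<Longrightarrow> hist_determined n X"
  unfolding hist_determined_def by blast

lemma hist_determinedD:
  "hist_determined n X \<Longrightarrow> \<omega> \<in> space M \<Longrightarrow> \<omega>' \<in> space M \<Longrightarrow> hist n \<omega> = hist n \<omega>' \<Longrightarrow> X \<omega> = X \<omega>'"
  unfolding hist_determined_def by blast

lemma hist_determined_Suc: "hist_determined n X \<Longrightarrow> hist_determined (Suc n) X"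
  by (rule hist_determinedI) (auto simp: hist_Suc dest: hist_determinedD)

lemma hist_determined_index: "hist_determined (Suc n) (I (Suc n))"
  by (rule hist_determinedI) (simp add: hist_Suc)

lemma hist_determined_comp:
  "hist_determined n X \<Longrightarrow> hist_determined n (\<lambda>\<omega>. F (X \<omega>))"
  unfolding hist_determined_def by metis

lemma hist_determined_comp2:
  "hist_determined n X \<Longrightarrow> hist_determined n Y \<Longrightarrow> hist_determined n (\<lambda>\<omega>. F (X \<omega>) (Y \<omega>))"
  unfolding hist_determined_def by metis

lemma finite_histories: "finite (histories n)"
  unfolding histories_def by (rule finite_lists_length_eq) simp

lemma card_histories: "card (histories n) = k ^ n"
  unfolding histories_def using card_lists_length_eq[of "{..<k}" n] by simp

lemma histories_Suc: "histories (Suc n) = (\<lambda>(u, i). u @ [i]) ` (histories n \<times> {..<k})"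
proof
  show "histories (Suc n) \<subseteq> (\<lambda>(u, i). u @ [i]) ` (histories n \<times> {..<k})"
  proof
    fix v assume v: "v \<in> histories (Suc n)"
    then have "v \<noteq> []" unfolding histories_def by auto
    then have "v = butlast v @ [last v]" by simp
    moreover have "butlast v \<in> histories n"
      using v unfolding histories_def by (auto dest: in_set_butlastD)
    moreover have "last v < k"
      using v last_in_set[OF \<open>v \<noteq> []\<close>] unfolding histories_def by auto
    ultimately show "v \<in> (\<lambda>(u, i). u @ [i]) ` (histories n \<times> {..<k})" by force
  qed
qed (auto simp: histories_def)

lemma sum_histories_Suc: "(\<Sum>v\<in>histories (Suc n). F v) = (\<Sum>u\<in>histories n. \<Sum>i<k. F (u @ [i]))"
proof -
  have "inj_on (\<lambda>(u, i). u @ [i]) (histories n \<times> {..<k})"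
    by (auto simp: inj_on_def)
  then show ?thesis
    unfolding histories_Suc by (simp add: sum.reindex sum.cartesian_product split_def)
qed

lemma hist_event_eq:
  assumes "length v = n"
  shows "{\<omega>\<in>space M. hist n \<omega> = v} = space M \<inter> (\<Inter>m<n. I (Suc m) -` {v ! m} \<inter> space M)"
  using assms by (auto simp: hist_eq_iff)

lemma sets_hist_event: "{\<omega>\<in>space M. hist n \<omega> = v} \<in> sets M"
proof (cases "length v = n")
  case True
  have "I (Suc m) \<in> measurable M (count_space UNIV)" for m
    using indices_indep unfolding indep_vars_def2 by auto
  then have "(\<Inter>m<n. I (Suc m) -` {v ! m} \<inter> space M) \<in> sets M" if "n \<noteq> 0"
    using that by (intro sets.finite_INT) (auto intro: measurable_sets)
  then show ?thesis unfolding hist_event_eq[OF True] by (cases "n = 0") auto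
next
  case False
  then show ?thesis by (simp add: hist_eq_iff)
qed

lemma prob_hist_event:
  assumes "v \<in> histories n"
  shows "prob {\<omega>\<in>space M. hist n \<omega> = v} = (1 / real k) ^ n"
proof (cases "n = 0")
  case True
  then show ?thesis using assms by (simp add: histories_def hist_eq_iff prob_space)
next
  case False
  define A where "A m = I m -` {v ! (m - 1)} \<inter> space M" for m
  have "{\<omega>\<in>space M. hist n \<omega> = v} = (\<Inter>m\<in>Suc ` {..<n}. A m)"
    using assms False by (auto simp: histories_def hist_eq_iff A_def)
  also have "prob \<dots> = (\<Prod>m\<in>Suc ` {..<n}. prob (A m))"
    using indices_indep False unfolding indep_vars_def2
    by (intro indep_setsD[of _ "{1..}"]) (auto simp: A_def)
  also have "\<dots> = (\<Prod>m\<in>Suc ` {..<n}. 1 / real k)"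
  proof (rule prod.cong)
    fix m assume "m \<in> Suc ` {..<n}"
    moreover have "A m = {\<omega>\<in>space M. I m \<omega> = v ! (m - 1)}" unfolding A_def by auto
    moreover have "v ! (m - 1) < k" if "m \<in> Suc ` {..<n}"
      using assms that unfolding histories_def by (auto simp: subset_iff)
    ultimately show "prob (A m) = 1 / real k" using indices_uniform by auto
  qed simp
  finally show ?thesis by (simp add: card_image)
qed

lemma hist_rep:
  assumes "v \<in> histories n"
  shows "hist_rep v \<in> space M" and "hist n (hist_rep v) = v"
proof -
  have "prob {\<omega>\<in>space M. hist n \<omega> = v} \<noteq> 0" using prob_hist_event[OF assms] k_pos by simp
  then have "{\<omega>\<in>space M. hist n \<omega> = v} \<noteq> {}" by (metis measure_empty)
  then obtain \<omega> where "\<omega> \<in> space M" "hist (length v) \<omega> = v"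
    using assms unfolding histories_def by auto
  then have "hist_rep v \<in> space M \<and> hist (length v) (hist_rep v) = v"
    unfolding hist_rep_def by (intro someI[of "\<lambda>\<omega>. \<omega> \<in> space M \<and> hist (length v) \<omega> = v"]) simp
  then show "hist_rep v \<in> space M" "hist n (hist_rep v) = v"
    using assms unfolding histories_def by auto
qed

lemma hist_rep_snoc:
  assumes "u \<in> histories n" "i < k"
  shows "hist_rep (u @ [i]) \<in> space M" "hist n (hist_rep (u @ [i])) = u" "I (Suc n) (hist_rep (u @ [i])) = i"
proof -
  have "u @ [i] \<in> histories (Suc n)" using assms unfolding histories_def by auto
  from hist_rep[OF this] show "hist_rep (u @ [i]) \<in> space M"
    and "hist n (hist_rep (u @ [i])) = u" "I (Suc n) (hist_rep (u @ [i])) = i"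
    unfolding hist_Suc by auto
qed

lemma hist_determined_rep:
  assumes "hist_determined n X" "\<omega> \<in> space M"
  shows "X (hist_rep (hist n \<omega>)) = X \<omega>"
  using hist_rep[OF hist_in_histories[OF assms(2)]] assms by (intro hist_determinedD) auto

lemma hist_determined_rep_snoc:
  assumes "hist_determined n X" "u \<in> histories n" "i < k"
  shows "X (hist_rep (u @ [i])) = X (hist_rep u)"
  using hist_rep_snoc[OF assms(2,3)] hist_rep[OF assms(2)] assms(1) by (intro hist_determinedD) auto

lemma hist_mean_mono: "(\<And>\<omega>. \<omega> \<in> space M \<Longrightarrow> X \<omega> \<le> Y \<omega>) \<Longrightarrow> hist_mean n X \<le> hist_mean n Y"
  unfolding hist_mean_def using hist_rep by (auto intro!: divide_right_mono sum_mono)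

lemma hist_mean_add: "hist_mean n (\<lambda>\<omega>. X \<omega> + Y \<omega>) = hist_mean n X + hist_mean n Y"
  unfolding hist_mean_def by (simp add: sum.distrib add_divide_distrib)

lemma hist_mean_diff: "hist_mean n (\<lambda>\<omega>. X \<omega> - Y \<omega>) = hist_mean n X - hist_mean n Y"
  unfolding hist_mean_def by (simp add: sum_subtractf diff_divide_distrib)

lemma hist_mean_cmult: "hist_mean n (\<lambda>\<omega>. c * X \<omega>) = c * hist_mean n X"
  unfolding hist_mean_def by (simp add: sum_distrib_left)

lemma hist_mean_const: "hist_mean n (\<lambda>\<omega>. c) = c"
  unfolding hist_mean_def using card_histories k_pos by simp

lemma hist_mean_nonneg: "(\<And>\<omega>. \<omega> \<in> space M \<Longrightarrow> 0 \<le> X \<omega>) \<Longrightarrow> 0 \<le> hist_mean n X"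
  using hist_mean_mono[of "\<lambda>_. 0" X n] by (simp add: hist_mean_const)

lemma hist_mean_Suc:
  assumes "hist_determined n X"
  shows "hist_mean (Suc n) X = hist_mean n X"
proof -
  have "(\<Sum>v\<in>histories (Suc n). X (hist_rep v)) = (\<Sum>u\<in>histories n. \<Sum>i<k. X (hist_rep u))"
    unfolding sum_histories_Suc using hist_determined_rep_snoc[OF assms] by simp
  then show ?thesis unfolding hist_mean_def using k_pos by (simp add: sum_distrib_left[symmetric])
qed

text \<open>Independence: the next index misses block \<open>j\<close> with probability \<open>1 - 1/k\<close>, whatever the past.\<close>
lemma hist_mean_Suc_index_neq:
  assumes "hist_determined n X" "j < k"
  shows "hist_mean (Suc n) (\<lambda>\<omega>. if I (Suc n) \<omega> = j then 0 else X \<omega>) = (real k - 1) / real k * hist_mean n X"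
proof -
  have "(\<Sum>v\<in>histories (Suc n). if I (Suc n) (hist_rep v) = j then 0 else X (hist_rep v))
      = (\<Sum>u\<in>histories n. \<Sum>i<k. if i = j then 0 else X (hist_rep u))"
    unfolding sum_histories_Suc using hist_rep_snoc(3) hist_determined_rep_snoc[OF assms(1)]
    by (intro sum.cong refl) auto
  also have "\<dots> = (\<Sum>u\<in>histories n. (real k - 1) * X (hist_rep u))"
  proof (rule sum.cong[OF refl])
    fix u
    have "(\<Sum>i<k. if i = j then 0 else X (hist_rep u)) = (\<Sum>i\<in>{..<k} - {j}. X (hist_rep u))"
      by (rule sum.mono_neutral_cong_right) auto
    then show "(\<Sum>i<k. if i = j then 0 else X (hist_rep u)) = (real k - 1) * X (hist_rep u)"
      using assms(2) by (simp add: of_nat_diff)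
  qed
  also have "\<dots> = (real k - 1) * (\<Sum>u\<in>histories n. X (hist_rep u))"
    by (simp add: sum_distrib_left)
  finally show ?thesis unfolding hist_mean_def using k_pos by (simp add: field_simps)
qed

lemma hist_determined_sum_indicator:
  fixes X :: "'w \<Rightarrow> real"
  assumes "hist_determined n X" "\<omega> \<in> space M"
  shows "X \<omega> = (\<Sum>v\<in>histories n. X (hist_rep v) * indicator {\<omega>\<in>space M. hist n \<omega> = v} \<omega>)"
proof -
  have "(\<Sum>v\<in>histories n. X (hist_rep v) * indicator {\<omega>\<in>space M. hist n \<omega> = v} \<omega>)
      = (\<Sum>v\<in>histories n. if v = hist n \<omega> then X (hist_rep (hist n \<omega>)) else 0)"
    by (rule sum.cong) (use assms(2) in \<open>auto simp: indicator_def\<close>)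
  also have "\<dots> = X \<omega>"
    using hist_in_histories[OF assms(2)] finite_histories hist_determined_rep[OF assms]
    by (simp add: sum.delta')
  finally show ?thesis by simp
qed

lemma hist_determined_measurable:
  fixes X :: "'w \<Rightarrow> real"
  assumes "hist_determined n X"
  shows "X \<in> borel_measurable M"
proof -
  have "(\<lambda>\<omega>. \<Sum>v\<in>histories n. X (hist_rep v) * indicator {\<omega>\<in>space M. hist n \<omega> = v} \<omega>) \<in> borel_measurable M"
    using sets_hist_event by measurable
  then show ?thesis
    by (rule measurable_cong[THEN iffD1, rotated]) (use hist_determined_sum_indicator[OF assms] in auto)
qed

lemma nn_integral_hist_determined:
  fixes X :: "'w \<Rightarrow> real"
  assumes "hist_determined n X" and nonneg: "\<And>\<omega>. \<omega> \<in> space M \<Longrightarrow> 0 \<le> X \<omega>"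
  shows "(\<integral>\<^sup>+\<omega>. ennreal (X \<omega>) \<partial>M) = ennreal (hist_mean n X)"
proof -
  have nn: "0 \<le> X (hist_rep v)" if "v \<in> histories n" for v using nonneg hist_rep[OF that] by auto
  have "(\<integral>\<^sup>+\<omega>. ennreal (X \<omega>) \<partial>M)
      = (\<integral>\<^sup>+\<omega>. (\<Sum>v\<in>histories n. ennreal (X (hist_rep v)) * indicator {\<omega>\<in>space M. hist n \<omega> = v} \<omega>) \<partial>M)"
  proof (rule nn_integral_cong)
    fix \<omega> assume "\<omega> \<in> space M"
    then have "ennreal (X \<omega>) = (\<Sum>v\<in>histories n. ennreal (X (hist_rep v) * indicator {\<omega>\<in>space M. hist n \<omega> = v} \<omega>))"
      using hist_determined_sum_indicator[OF assms(1)] nn by (simp add: sum_ennreal)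
    also have "\<dots> = (\<Sum>v\<in>histories n. ennreal (X (hist_rep v)) * indicator {\<omega>\<in>space M. hist n \<omega> = v} \<omega>)"
      by (rule sum.cong) (auto simp: indicator_def)
    finally show "ennreal (X \<omega>) = \<dots>" .
  qed
  also have "\<dots> = (\<Sum>v\<in>histories n. ennreal (X (hist_rep v)) * emeasure M {\<omega>\<in>space M. hist n \<omega> = v})"
    using sets_hist_event by (simp add: nn_integral_sum nn_integral_cmult_indicator)
  also have "\<dots> = (\<Sum>v\<in>histories n. ennreal (X (hist_rep v) * (1 / real k) ^ n))"
    using prob_hist_event nn by (intro sum.cong refl) (simp add: emeasure_eq_measure ennreal_mult)
  also have "\<dots> = ennreal (hist_mean n X)"
    using nn unfolding hist_mean_def
    by (simp add: sum_ennreal sum_distrib_right[symmetric] power_one_over divide_inverse power_inverse)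
  finally show ?thesis .
qed

text \<open>A Borel--Cantelli argument: summable means make the series of the (nonnegative) quantities
  integrable, hence almost surely finite.\<close>
lemma hist_determined_AE_LIMSEQ_0:
  fixes X :: "nat \<Rightarrow> 'w \<Rightarrow> real"
  assumes det: "\<And>n. hist_determined n (X n)" and nonneg: "\<And>n \<omega>. \<omega> \<in> space M \<Longrightarrow> 0 \<le> X n \<omega>"
    and summable: "summable (\<lambda>n. hist_mean n (X n))"
  shows "AE \<omega> in M. (\<lambda>n. X n \<omega>) \<longlonglongrightarrow> 0"
proof -
  have meas: "(\<lambda>\<omega>. ennreal (X n \<omega>)) \<in> borel_measurable M" for n
    using hist_determined_measurable[OF det] by measurable
  have "(\<integral>\<^sup>+\<omega>. (\<Sum>n. ennreal (X n \<omega>)) \<partial>M) = (\<Sum>n. (\<integral>\<^sup>+\<omega>. ennreal (X n \<omega>) \<partial>M))"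
    by (rule nn_integral_suminf) (rule meas)
  also have "\<dots> = ennreal (\<Sum>n. hist_mean n (X n))"
    using nn_integral_hist_determined[OF det nonneg] hist_mean_nonneg[OF nonneg] summable
    by (simp add: suminf_ennreal2)
  finally have "(\<integral>\<^sup>+\<omega>. (\<Sum>n. ennreal (X n \<omega>)) \<partial>M) \<noteq> \<infinity>" by simp
  then have "AE \<omega> in M. (\<Sum>n. ennreal (X n \<omega>)) \<noteq> \<infinity>"
    by (intro nn_integral_PInf_AE) (use meas in measurable)
  then show ?thesis
  proof (rule AE_mp, intro AE_I2 impI)
    fix \<omega> assume "\<omega> \<in> space M" "(\<Sum>n. ennreal (X n \<omega>)) \<noteq> \<infinity>"
    then have "summable (\<lambda>n. X n \<omega>)"
      using nonneg by (intro summable_suminf_not_top) auto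
    then show "(\<lambda>n. X n \<omega>) \<longlonglongrightarrow> 0" by (rule summable_LIMSEQ_zero)
  qed
qed

end

section \<open>The randomized block scheme\<close>

locale random_block_mm = block_mm blk k Th f L + uniform_indices M I k
  for blk :: "'n::finite \<Rightarrow> nat" and k :: nat and Th :: "nat \<Rightarrow> (real^'n) set"
    and f :: "real^'n \<Rightarrow> real" and L :: real and M :: "'w measure" and I :: "nat \<Rightarrow> 'w \<Rightarrow> nat" +
  fixes \<theta> :: "nat \<Rightarrow> 'w \<Rightarrow> real^'n" and \<theta>0 :: "real^'n"
    and gs :: "nat \<Rightarrow> 'w \<Rightarrow> nat \<Rightarrow> real^'n \<Rightarrow> real"
  assumes f_bdd: "bdd_below (range f)"
    and init: "\<exists>\<kappa> g. first_order_surrogate L f \<Theta> \<kappa> g \<and> \<theta>0 \<in> arg_min_set g \<Theta>"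
    and start: "\<And>\<omega>. \<omega> \<in> space M \<Longrightarrow> \<theta> 0 \<omega> = \<theta>0"
    and steps: "\<And>n \<omega>. \<omega> \<in> space M \<Longrightarrow> mm_step (\<theta> n \<omega>) (\<theta> (Suc n) \<omega>) (I (Suc n) \<omega>) (gs (Suc n) \<omega>)"
    and \<theta>_adapted: "\<And>n. hist_determined n (\<theta> n)"
begin

lemma theta_mem: "\<omega> \<in> space M \<Longrightarrow> \<theta> n \<omega> \<in> \<Theta>"
proof (induction n)
  case 0
  then show ?case using init start unfolding arg_min_set_def by auto
next
  case (Suc n)
  then show ?case by (intro mm_step_mem[OF steps]) simp_all
qed

lemma f_theta_antimono: "\<omega> \<in> space M \<Longrightarrow> antimono (\<lambda>n. f (\<theta> n \<omega>))"
  by (intro decseq_SucI mm_step_descent[OF steps] theta_mem)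

definition descent :: "nat \<Rightarrow> 'w \<Rightarrow> real" where
  "descent n \<omega> = f (\<theta> n \<omega>) - f (\<theta> (Suc n) \<omega>)"

definition init_slope :: real where
  "init_slope = (SOME E. 0 \<le> E \<and> (\<forall>j. block_slope_bound j \<theta>0 E))"

lemma init_slope: "0 \<le> init_slope" "block_slope_bound j \<theta>0 init_slope"
proof -
  obtain \<kappa> g where "first_order_surrogate L f \<Theta> \<kappa> g" "\<theta>0 \<in> arg_min_set g \<Theta>"
    using init by blast
  then obtain E where "0 \<le> E" "\<And>j. block_slope_bound j \<theta>0 E"
    by (rule block_slope_bound_at_surrogate_minimiser) (rule that)
  then have "0 \<le> E \<and> (\<forall>j. block_slope_bound j \<theta>0 E)" by blast
  then have "0 \<le> init_slope \<and> (\<forall>j. block_slope_bound j \<theta>0 init_slope)"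
    unfolding init_slope_def by (rule someI)
  then show "0 \<le> init_slope" "block_slope_bound j \<theta>0 init_slope" by auto
qed

primrec slope_deficit :: "nat \<Rightarrow> nat \<Rightarrow> 'w \<Rightarrow> real" where
  "slope_deficit j 0 \<omega> = init_slope"
| "slope_deficit j (Suc n) \<omega> =
     (if I (Suc n) \<omega> = j then 0 else slope_deficit j n \<omega>) + sqrt (4 * Lp * descent n \<omega>)"

lemma descent_nonneg: "\<omega> \<in> space M \<Longrightarrow> 0 \<le> descent n \<omega>"
  unfolding descent_def using mm_step_descent[OF steps theta_mem] by simp

lemma slope_deficit_nonneg: "\<omega> \<in> space M \<Longrightarrow> 0 \<le> slope_deficit j n \<omega>"
  by (induction n) (auto simp: init_slope descent_nonneg)

lemma block_slope_bound_slope_deficit: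
  assumes "\<omega> \<in> space M"
  shows "block_slope_bound j (\<theta> n \<omega>) (slope_deficit j n \<omega>)"
proof (induction n)
  case 0
  then show ?case using start[OF assms] init_slope by simp
next
  case (Suc n)
  note step = steps[OF assms, of n] and mem = theta_mem[OF assms, of n]
  show ?case
  proof (cases "I (Suc n) \<omega> = j")
    case True
    then show ?thesis using block_slope_bound_updated[OF step mem] by (simp add: descent_def)
  next
    case False
    then show ?thesis using block_slope_bound_kept[OF step mem _ Suc.IH] by (simp add: descent_def)
  qed
qed

lemma dir_deriv_ge_slope_deficit:
  assumes "\<omega> \<in> space M" "y \<in> \<Theta>"
  shows "- (\<Sum>j<k. slope_deficit j n \<omega>) * norm (y - \<theta> n \<omega>) \<le> dir_deriv f (\<theta> n \<omega>) (y - \<theta> n \<omega>)"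
  using mm_step_surrogate[OF steps[OF assms(1)]] theta_mem[OF assms(1)] assms(2)
    block_slope_bound_slope_deficit[OF assms(1)] slope_deficit_nonneg[OF assms(1)]
  by (rule dir_deriv_lower_bound)

lemma hist_determined_f_theta: "hist_determined n (\<lambda>\<omega>. f (\<theta> n \<omega>))"
  using hist_determined_comp[OF \<theta>_adapted, where F=f] .

lemma hist_determined_descent: "hist_determined (Suc n) (descent n)"
  using hist_determined_comp2[OF hist_determined_Suc[OF \<theta>_adapted] \<theta>_adapted, where F="\<lambda>x y. f x - f y"]
  unfolding descent_def[abs_def] .

lemma hist_determined_slope_deficit: "hist_determined n (slope_deficit j n)"
proof (induction n)
  case 0
  then show ?case by (rule hist_determinedI) simp
next
  case (Suc n)
  have "hist_determined (Suc n) (\<lambda>\<omega>. if I (Suc n) \<omega> = j then 0 else slope_deficit j n \<omega>)"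
    using hist_determined_comp2[OF hist_determined_index hist_determined_Suc[OF Suc.IH],
        where F="\<lambda>i z. if i = j then 0 else z"] .
  from hist_determined_comp2[OF this hist_determined_descent, where F="\<lambda>z e. z + sqrt (4 * Lp * e)"]
  show ?case by (simp add: fun_eq_iff)
qed

lemma slope_deficit_sq_Suc:
  assumes "\<omega> \<in> space M"
  shows "(slope_deficit j (Suc n) \<omega>)\<^sup>2
    \<le> (if I (Suc n) \<omega> = j then 0 else (1 + 1 / (2 * real k)) * (slope_deficit j n \<omega>)\<^sup>2)
       + (1 + 2 * real k) * (4 * Lp * descent n \<omega>)"
proof -
  have k: "0 < real k" using k_pos by simp
  define a where "a = sqrt (4 * Lp * descent n \<omega>)"
  have a2: "4 * Lp * descent n \<omega> = a\<^sup>2" unfolding a_def using descent_nonneg[OF assms] by simp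
  have "(slope_deficit j n \<omega> + a)\<^sup>2
      \<le> (1 + 1 / (2 * real k)) * (slope_deficit j n \<omega>)\<^sup>2 + (1 + 1 / (1 / (2 * real k))) * a\<^sup>2"
    using k by (intro power2_add_le_weighted) simp
  moreover have "a\<^sup>2 \<le> (1 + 2 * real k) * a\<^sup>2" using k by (simp add: algebra_simps)
  ultimately show ?thesis
    unfolding slope_deficit.simps unfolding a_def[symmetric] unfolding a2 by auto
qed

lemma hist_mean_slope_deficit_sq_Suc:
  assumes "j < k"
  shows "hist_mean (Suc n) (\<lambda>\<omega>. (slope_deficit j (Suc n) \<omega>)\<^sup>2)
    \<le> (1 + 1 / (2 * real k)) * ((real k - 1) / real k) * hist_mean n (\<lambda>\<omega>. (slope_deficit j n \<omega>)\<^sup>2)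
       + (1 + 2 * real k) * (4 * Lp)
         * (hist_mean n (\<lambda>\<omega>. f (\<theta> n \<omega>)) - hist_mean (Suc n) (\<lambda>\<omega>. f (\<theta> (Suc n) \<omega>)))"
proof -
  let ?Z = "\<lambda>\<omega>. (1 + 1 / (2 * real k)) * (slope_deficit j n \<omega>)\<^sup>2"
  have det: "hist_determined n ?Z"
    using hist_determined_comp[OF hist_determined_slope_deficit, where F="\<lambda>z. (1 + 1 / (2 * real k)) * z\<^sup>2"] .
  have "hist_mean (Suc n) (\<lambda>\<omega>. (slope_deficit j (Suc n) \<omega>)\<^sup>2)
      \<le> hist_mean (Suc n) (\<lambda>\<omega>. (if I (Suc n) \<omega> = j then 0 else ?Z \<omega>) + (1 + 2 * real k) * (4 * Lp * descent n \<omega>))"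
    by (intro hist_mean_mono slope_deficit_sq_Suc)
  also have "\<dots> = (real k - 1) / real k * hist_mean n ?Z
      + (1 + 2 * real k) * (4 * Lp) * hist_mean (Suc n) (descent n)"
    by (simp add: hist_mean_add hist_mean_cmult hist_mean_Suc_index_neq[OF det assms])
  also have "hist_mean (Suc n) (descent n)
      = hist_mean n (\<lambda>\<omega>. f (\<theta> n \<omega>)) - hist_mean (Suc n) (\<lambda>\<omega>. f (\<theta> (Suc n) \<omega>))"
    unfolding descent_def[abs_def] hist_mean_diff
    by (simp add: hist_mean_Suc[OF hist_determined_f_theta])
  finally show ?thesis by (simp add: hist_mean_cmult mult_ac)
qed

text \<open>Since \<open>(1 + 1/(2k)) (1 - 1/k) < 1\<close> and \<open>f\<close> is bounded below, the recursion for the mean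
  squared slope deficit makes it summable.\<close>
lemma summable_hist_mean_slope_deficit_sq:
  assumes "j < k"
  shows "summable (\<lambda>n. hist_mean n (\<lambda>\<omega>. (slope_deficit j n \<omega>)\<^sup>2))"
proof -
  have k: "1 \<le> real k" using k_pos by simp
  obtain lb where lb: "\<And>x. lb \<le> f x" using f_bdd unfolding bdd_below_def by auto
  have "(1 + 1 / (2 * real k)) * ((real k - 1) / real k) = 1 - 1 / (2 * real k) - 1 / (2 * (real k)\<^sup>2)"
    using k by (simp add: field_simps power2_eq_square)
  moreover have "0 < 1 / (2 * real k)" "0 < 1 / (2 * (real k)\<^sup>2)" using k by simp_all
  ultimately have q: "(1 + 1 / (2 * real k)) * ((real k - 1) / real k) < 1" by linarith
  show ?thesis
  proof (rule summable_of_contracting_recursion[where lb=lb and C="(1 + 2 * real k) * (4 * Lp)"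
      and E="\<lambda>n. hist_mean n (\<lambda>\<omega>. f (\<theta> n \<omega>))" and q="(1 + 1 / (2 * real k)) * ((real k - 1) / real k)"])
    fix n
    show "0 \<le> hist_mean n (\<lambda>\<omega>. (slope_deficit j n \<omega>)\<^sup>2)" by (rule hist_mean_nonneg) simp
    show "lb \<le> hist_mean n (\<lambda>\<omega>. f (\<theta> n \<omega>))"
      using hist_mean_mono[of "\<lambda>_. lb" "\<lambda>\<omega>. f (\<theta> n \<omega>)" n] lb by (simp add: hist_mean_const)
  qed (use k in simp, fact q, simp, rule hist_mean_slope_deficit_sq_Suc[OF assms])
qed

lemma slope_deficit_AE_LIMSEQ_0:
  assumes "j < k"
  shows "AE \<omega> in M. (\<lambda>n. slope_deficit j n \<omega>) \<longlonglongrightarrow> 0"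
proof -
  have "AE \<omega> in M. (\<lambda>n. (slope_deficit j n \<omega>)\<^sup>2) \<longlonglongrightarrow> 0"
    using hist_determined_comp[OF hist_determined_slope_deficit, where F=power2]
      summable_hist_mean_slope_deficit_sq[OF assms]
    by (intro hist_determined_AE_LIMSEQ_0) auto
  then show ?thesis
  proof (rule AE_mp, intro AE_I2 impI)
    fix \<omega> assume "\<omega> \<in> space M" "(\<lambda>n. (slope_deficit j n \<omega>)\<^sup>2) \<longlonglongrightarrow> 0"
    then have "(\<lambda>n. sqrt ((slope_deficit j n \<omega>)\<^sup>2)) \<longlonglongrightarrow> sqrt 0" by (intro tendsto_real_sqrt)
    then show "(\<lambda>n. slope_deficit j n \<omega>) \<longlonglongrightarrow> 0"
      using slope_deficit_nonneg[OF \<open>\<omega> \<in> space M\<close>] by simp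
  qed
qed

theorem AE_antimono_and_stationary:
  "AE \<omega> in M. antimono (\<lambda>n. f (\<theta> n \<omega>)) \<and>
     liminf (\<lambda>n. INF y\<in>\<Theta> - {\<theta> n \<omega>}.
       ereal (dir_deriv f (\<theta> n \<omega>) (y - \<theta> n \<omega>) / norm (y - \<theta> n \<omega>))) \<ge> 0"
proof -
  have "AE \<omega> in M. \<forall>j\<in>{..<k}. (\<lambda>n. slope_deficit j n \<omega>) \<longlonglongrightarrow> 0"
    by (rule AE_finite_allI) (auto intro: slope_deficit_AE_LIMSEQ_0)
  then show ?thesis
  proof (rule AE_mp, intro AE_I2 impI conjI)
    fix \<omega> assume \<omega>: "\<omega> \<in> space M" and lim: "\<forall>j\<in>{..<k}. (\<lambda>n. slope_deficit j n \<omega>) \<longlonglongrightarrow> 0"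
    show "antimono (\<lambda>n. f (\<theta> n \<omega>))" by (rule f_theta_antimono[OF \<omega>])
    let ?W = "\<lambda>n. \<Sum>j<k. slope_deficit j n \<omega>"
    show "0 \<le> liminf (\<lambda>n. INF y\<in>\<Theta> - {\<theta> n \<omega>}.
       ereal (dir_deriv f (\<theta> n \<omega>) (y - \<theta> n \<omega>) / norm (y - \<theta> n \<omega>)))"
    proof (rule liminf_nonneg_of_vanishing_lower_bound[where W="?W"])
      have "?W \<longlonglongrightarrow> (\<Sum>j<k. 0)" by (rule tendsto_sum) (use lim in auto)
      then show "?W \<longlonglongrightarrow> 0" by simp
      fix n
      show "ereal (- ?W n) \<le> (INF y\<in>\<Theta> - {\<theta> n \<omega>}.
          ereal (dir_deriv f (\<theta> n \<omega>) (y - \<theta> n \<omega>) / norm (y - \<theta> n \<omega>)))"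
      proof (rule INF_greatest)
        fix y assume y: "y \<in> \<Theta> - {\<theta> n \<omega>}"
        then have "0 < norm (y - \<theta> n \<omega>)" by simp
        moreover have "- ?W n * norm (y - \<theta> n \<omega>) \<le> dir_deriv f (\<theta> n \<omega>) (y - \<theta> n \<omega>)"
          using y by (intro dir_deriv_ge_slope_deficit[OF \<omega>]) simp
        ultimately show "ereal (- ?W n) \<le> ereal (dir_deriv f (\<theta> n \<omega>) (y - \<theta> n \<omega>) / norm (y - \<theta> n \<omega>))"
          by (simp add: pos_le_divide_eq)
      qed
    qed
  qed
qed

end

theorem proposition3p1:
  fixes blk :: "'n::finite \<Rightarrow> nat" and k :: nat
    and Th :: "nat \<Rightarrow> (real^'n) set"
    and f :: "real^'n \<Rightarrow> real" and L :: real
    and M :: "'w measure" and I :: "nat \<Rightarrow> 'w \<Rightarrow> nat"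
    and \<theta> :: "nat \<Rightarrow> 'w \<Rightarrow> real^'n" and \<theta>0 :: "real^'n"
    and gs :: "nat \<Rightarrow> 'w \<Rightarrow> nat \<Rightarrow> real^'n \<Rightarrow> real"
  assumes blocks: "range blk = {..<k}"
    and blocks_sub: "\<forall>i<k. Th i \<subseteq> {x. \<forall>j. blk j \<noteq> i \<longrightarrow> x $ j = 0}"
    and blocks_convex: "\<forall>i<k. convex (Th i)"
    and f_cont: "continuous_on UNIV f"
    and f_bdd: "bdd_below (range f)"
    and f_dd: "\<forall>x\<in>blk_product blk k Th. \<forall>y\<in>blk_product blk k Th. dir_deriv_exists f x (y - x)"
    and P: "prob_space M"
    and I_indep: "prob_space.indep_vars M (\<lambda>_. count_space UNIV) I {1..}"
    and I_range: "\<forall>n\<ge>1. \<forall>\<omega>\<in>space M. I n \<omega> < k"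
    and I_unif: "\<forall>n\<ge>1. \<forall>i<k. measure M {\<omega>\<in>space M. I n \<omega> = i} = 1 / real k"
    and init: "\<exists>\<theta>m\<in>blk_product blk k Th. \<exists>g. separable blk k g \<and> majorant f g \<and>
                 first_order_surrogate L f (blk_product blk k Th) \<theta>m g \<and>
                 \<theta>0 \<in> arg_min_set g (blk_product blk k Th)"
    and start: "\<forall>\<omega>\<in>space M. \<theta> 0 \<omega> = \<theta>0"
    and surr: "\<forall>n\<ge>1. \<forall>\<omega>\<in>space M.
                 majorant f (\<lambda>x. \<Sum>i<k. gs n \<omega> i (blk_proj blk i x)) \<and>
                 first_order_surrogate L f (blk_product blk k Th) (\<theta> (n - 1) \<omega>)
                   (\<lambda>x. \<Sum>i<k. gs n \<omega> i (blk_proj blk i x))"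
    and upd_keep: "\<forall>n\<ge>1. \<forall>\<omega>\<in>space M. \<forall>j. blk j \<noteq> I n \<omega> \<longrightarrow> \<theta> n \<omega> $ j = \<theta> (n - 1) \<omega> $ j"
    and upd_min: "\<forall>n\<ge>1. \<forall>\<omega>\<in>space M.
                 blk_proj blk (I n \<omega>) (\<theta> n \<omega>) \<in> arg_min_set (gs n \<omega> (I n \<omega>)) (Th (I n \<omega>))"
    and gs_adapted: "\<forall>n\<ge>1. \<forall>\<omega>\<in>space M. \<forall>\<omega>'\<in>space M.
                 (\<forall>m\<in>{1..<n}. I m \<omega> = I m \<omega>') \<longrightarrow> gs n \<omega> = gs n \<omega>'"
    and \<theta>_adapted: "\<forall>n. \<forall>\<omega>\<in>space M. \<forall>\<omega>'\<in>space M.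
                 (\<forall>m\<in>{1..n}. I m \<omega> = I m \<omega>') \<longrightarrow> \<theta> n \<omega> = \<theta> n \<omega>'"
  shows "AE \<omega> in M. antimono (\<lambda>n. f (\<theta> n \<omega>)) \<and>
           liminf (\<lambda>n. INF y\<in>blk_product blk k Th - {\<theta> n \<omega>}.
                    ereal (dir_deriv f (\<theta> n \<omega>) (y - \<theta> n \<omega>) / norm (y - \<theta> n \<omega>))) \<ge> 0"
  \<comment> \<open>Not needed: \<open>blocks\<close>, \<open>blocks_sub\<close>, \<open>f_cont\<close>, \<open>gs_adapted\<close>, and separability and
    majorization of the initial surrogate.\<close>
proof -
  have uniform: "uniform_indices M I k"
    using I_indep I_range I_unif by (intro uniform_indices.intro P uniform_indices_axioms.intro) simp_all
  interpret uniform_indices M I k by (rule uniform)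
  interpret block_mm blk k Th f L by (rule block_mm.intro[OF blocks_convex f_dd])
  have steps: "mm_step (\<theta> n \<omega>) (\<theta> (Suc n) \<omega>) (I (Suc n) \<omega>) (gs (Suc n) \<omega>)"
    if "\<omega> \<in> space M" for n \<omega>
    using surr[rule_format, of "Suc n" \<omega>] upd_keep[rule_format, of "Suc n" \<omega>]
      upd_min[rule_format, of "Suc n" \<omega>] I_range[rule_format, of "Suc n" \<omega>] that
    unfolding mm_step_def block_sum_def[abs_def] by simp
  have adapted: "hist_determined n (\<theta> n)" for n
    using \<theta>_adapted unfolding hist_determined_def hist_eq_hist_iff by blast
  have init_minimiser: "\<exists>\<kappa> g. first_order_surrogate L f \<Theta> \<kappa> g \<and> \<theta>0 \<in> arg_min_set g \<Theta>"
    using init by blast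
  interpret random_block_mm blk k Th f L M I \<theta> \<theta>0 gs
    using start
    by (intro random_block_mm.intro block_mm_axioms random_block_mm_axioms.intro uniform
        f_bdd init_minimiser steps adapted) simp_all
  show ?thesis by (rule AE_antimono_and_stationary)
qed

end
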